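(* Let $f:\mathbb{R}^n\times\mathbb{R}\to\mathbb{R}^n$ be $C^1$, let $\lambda_-<\lambda_+$, let $\Lambda$ be a parameter shift from $\lambda_-$ to $\lambda_+$, and let $r>0$. Let $\Phi$ be the solution cocycle of $\dot x=f(x,\Lambda(rt))$ and $\phi_-$ the flow of $\dot x=f(x,\lambda_-)$. Assume $A_-$ is an asymptotically stable attractor for $\phi_-$. For $\eta>0$ and $t\in\mathbb{R}$ define $$A_t^{\eta}:=\bigcap_{\tau>0}\overline{\bigcup_{s\le-\tau}\Phi\big(t,s,\mathcal{N}_\eta(A_-)\big)}.$$ Then there is $\tilde\eta>0$ such that the nonautonomous set $\{A^\eta_t\}_{t\in\mathbb{R}}$ is independent of $\eta$ for $\eta\in(0,\tilde\eta]$, i.e. $A_t^\eta=A_t^{\eta'}$ for all $t\in\mathbb{R}$ and all $\eta,\eta'\in(0,\tilde\eta]$.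
   Context: A parameter shift from $\lambda_-$ to $\lambda_+$ is a smooth $\Lambda:\mathbb{R}\to(\lambda_-,\lambda_+)$ with $\lim_{\tau\to\pm\infty}\Lambda(\tau)=\lambda_\pm$ and $\lim_{\tau\to\pm\infty}\Lambda'(\tau)=0$. Solutions are assumed to exist for all time; $\Phi(t,s,x_0)$ is the value at time $t$ of the solution with $x(s)=x_0$. $d(X,Y)=\sup_{x\in X}\inf_{y\in Y}\|x-y\|$ and $\mathcal{N}_\eta(M)=\{x: d(x,M)<\eta\}$. A compact $\phi_-$-invariant set $M$ is asymptotically stable if (i) for every $\epsilon>0$ there is $\delta>0$ with $d(\phi_-(t,y),M)<\epsilon$ for all $t>0$, $y\in\mathcal{N}_\delta(M)$, and (ii) there is $\eta>0$ with $\lim_{t\to\infty}d(\phi_-(t,y),M)=0$ for all $y\in\mathcal{N}_\eta(M)$. *)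

theory Defs
  imports "HOL-Analysis.Analysis"
begin

definition C1_map :: "('a::real_normed_vector \<Rightarrow> 'b::real_normed_vector) \<Rightarrow> bool" where
  "C1_map f \<longleftrightarrow> (\<exists>f'. (\<forall>z. (f has_derivative blinfun_apply (f' z)) (at z)) \<and> continuous_on UNIV f')"

definition smooth_real :: "(real \<Rightarrow> real) \<Rightarrow> bool" where
  "smooth_real L \<longleftrightarrow> (\<exists>D::nat \<Rightarrow> real \<Rightarrow> real. D 0 = L \<and>
      (\<forall>k t. (D k has_real_derivative D (Suc k) t) (at t)))"

definition parameter_shift :: "(real \<Rightarrow> real) \<Rightarrow> real \<Rightarrow> real \<Rightarrow> bool" where
  "parameter_shift L lm lp \<longleftrightarrow> smooth_real L \<and> (\<forall>t. lm < L t \<and> L t < lp) \<and>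
     (L \<longlongrightarrow> lm) at_bot \<and> (L \<longlongrightarrow> lp) at_top \<and>
     (deriv L \<longlongrightarrow> 0) at_bot \<and> (deriv L \<longlongrightarrow> 0) at_top"

definition pdist :: "'a::real_normed_vector \<Rightarrow> 'a set \<Rightarrow> real" where
  "pdist x M = (INF y\<in>M. norm (x - y))"

definition nbhd :: "real \<Rightarrow> 'a::real_normed_vector set \<Rightarrow> 'a set" where
  "nbhd eta M = {x. pdist x M < eta}"

definition flow_invariant :: "(real \<Rightarrow> 'a \<Rightarrow> 'a) \<Rightarrow> 'a set \<Rightarrow> bool" where
  "flow_invariant phi M \<longleftrightarrow> (\<forall>t. phi t ` M = M)"

definition asymp_stable :: "(real \<Rightarrow> 'a::real_normed_vector \<Rightarrow> 'a) \<Rightarrow> 'a set \<Rightarrow> bool" where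
  "asymp_stable phi M \<longleftrightarrow> compact M \<and> flow_invariant phi M \<and>
     (\<forall>\<epsilon>>0. \<exists>\<delta>>0. \<forall>y\<in>nbhd \<delta> M. \<forall>t>0. pdist (phi t y) M < \<epsilon>) \<and>
     (\<exists>\<eta>>0. \<forall>y\<in>nbhd \<eta> M. ((\<lambda>t. pdist (phi t y) M) \<longlongrightarrow> 0) at_top)"

definition pullback_set ::
  "(real \<Rightarrow> real \<Rightarrow> 'a::real_normed_vector \<Rightarrow> 'a) \<Rightarrow> 'a set \<Rightarrow> real \<Rightarrow> real \<Rightarrow> 'a set" where
  "pullback_set Phi A eta t =
     (\<Inter>\<tau>\<in>{0<..}. closure (\<Union>s\<in>{..-\<tau>}. Phi t s ` nbhd eta A))"

end

theory Submission
  imports Defs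
begin

text \<open>A point x of \<open>A\<^sub>t\<^sup>\<eta>'\<close> is a limit of points \<open>\<Phi>(t,s,y)\<close> with \<open>s \<rightarrow> -\<infinity>\<close> and y within
  \<open>\<eta>'\<close> of \<open>A\<^sub>-\<close>. Along a subsequence the initial points y converge to a point \<open>y\<^sub>0\<close> which, for \<open>\<eta>'\<close>
  below the radius of the basin of \<open>A\<^sub>-\<close>, is attracted by \<open>A\<^sub>-\<close>: its \<open>\<phi>\<^sub>-\<close>-orbit comes within
  \<open>\<eta>/2\<close> of \<open>A\<^sub>-\<close> at some time T. For very negative s the parameter \<open>\<Lambda>(rt)\<close> is close to
  \<open>\<lambda>\<^sub>-\<close> on \<open>[s, s+T]\<close>, so continuous dependence on initial value and parameter (a Gronwall
  estimate) puts \<open>\<Phi>(s+T,s,y)\<close> within \<open>\<eta>\<close> of \<open>A\<^sub>-\<close>, and by the cocycle property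
  \<open>\<Phi>(t,s,y) = \<Phi>(t,s+T,\<Phi>(s+T,s,y))\<close>. Hence \<open>A\<^sub>t\<^sup>\<eta>' \<subseteq> A\<^sub>t\<^sup>\<eta>\<close> for every \<open>\<eta> > 0\<close>, and the sets
  agree for all \<open>\<eta>, \<eta>'\<close> below the basin radius.\<close>

lemma C1_map_lipschitz_on_cball:
  fixes f :: "'a::euclidean_space \<Rightarrow> 'b::real_normed_vector"
  assumes "C1_map f"
  obtains M where "M \<ge> 0"
    "\<And>u v. u \<in> cball 0 K \<Longrightarrow> v \<in> cball 0 K \<Longrightarrow> norm (f u - f v) \<le> M * norm (u - v)"
proof -
  obtain f' where f': "\<And>z. (f has_derivative blinfun_apply (f' z)) (at z)"
    and cont: "continuous_on UNIV f'"
    using assms unfolding C1_map_def by blast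
  obtain M where "M \<ge> 0" and M: "\<And>z. z \<in> cball 0 K \<Longrightarrow> norm (f' z) \<le> M"
    using continuous_on_compact_bound[OF compact_cball continuous_on_subset[OF cont]] by blast
  show thesis
  proof (rule that[OF \<open>M \<ge> 0\<close>])
    fix u v :: 'a assume "u \<in> cball 0 K" "v \<in> cball 0 K"
    then show "norm (f u - f v) \<le> M * norm (u - v)"
      using M by (intro differentiable_bound[OF convex_cball[of 0 K], where f' = "\<lambda>z. blinfun_apply (f' z)"])
        (auto intro: has_derivative_at_withinI[OF f'] simp: norm_blinfun.rep_eq[symmetric])
  qed
qed

lemma has_real_derivative_inner_self:
  fixes w :: "real \<Rightarrow> 'a::real_inner"
  assumes "(w has_vector_derivative w') (at t)"
  shows "((\<lambda>t. w t \<bullet> w t) has_real_derivative 2 * (w t \<bullet> w')) (at t)"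
proof -
  have "((\<lambda>t. w t \<bullet> w t) has_derivative (\<lambda>h. w t \<bullet> (h *\<^sub>R w') + (h *\<^sub>R w') \<bullet> w t)) (at t)"
    using assms unfolding has_vector_derivative_def by (intro has_derivative_inner)
  then show ?thesis unfolding has_field_derivative_def
    by (rule has_derivative_eq_rhs) (auto simp: inner_commute algebra_simps fun_eq_iff)
qed

lemma has_vector_derivative_shift_arg:
  assumes "(g has_vector_derivative g') (at (s + t))"
  shows "((\<lambda>t. g (s + t)) has_vector_derivative g') (at t)"
proof -
  have "((\<lambda>t. s + t) has_vector_derivative 1) (at t)"
    by (auto intro!: derivative_eq_intros simp: has_vector_derivative_def)
  from vector_diff_chain_at[OF this assms] show ?thesis by (simp add: o_def)
qed

lemma affine_gronwall:
  fixes g g' :: "real \<Rightarrow> real"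
  assumes "a \<le> b"
    and deriv: "\<And>t. (g has_real_derivative g' t) (at t)"
    and bound: "\<And>t. a < t \<Longrightarrow> t < b \<Longrightarrow> g' t \<le> c * (g t + k)"
  shows "g b + k \<le> (g a + k) * exp (c * (b - a))"
proof -
  define h where "h t = (g t + k) * exp (- c * (t - a))" for t
  have h_deriv: "(h has_real_derivative (g' t - c * (g t + k)) * exp (- c * (t - a))) (at t)" for t
    unfolding h_def by (auto intro!: derivative_eq_intros deriv simp: algebra_simps)
  have "h b \<le> h a"
  proof (rule DERIV_nonpos_imp_decreasing_open[OF \<open>a \<le> b\<close>])
    show "\<exists>y. (h has_real_derivative y) (at t) \<and> y \<le> 0" if "a < t" "t < b" for t
      using h_deriv bound[OF that] by (metis diff_le_0_iff_le exp_ge_zero mult_nonpos_nonneg)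
    show "continuous_on {a..b} h"
      using h_deriv by (meson DERIV_isCont continuous_at_imp_continuous_on)
  qed
  then have "h b * exp (c * (b - a)) \<le> h a * exp (c * (b - a))"
    by simp
  then show ?thesis
    by (simp add: h_def mult.assoc flip: exp_add)
qed

lemma inner_le_of_norm_le_mult_add:
  fixes v w :: "'a::real_inner"
  assumes "M \<ge> 0" and "norm w \<le> M * (norm v + d)"
  shows "2 * (v \<bullet> w) \<le> 3 * M * ((norm v)\<^sup>2 + d\<^sup>2)"
proof -
  have "2 * (v \<bullet> w) \<le> 2 * (norm v * (M * (norm v + d)))"
    using norm_cauchy_schwarz[of v w] assms(2)
    by (meson mult_left_mono norm_ge_zero order_trans mult_le_cancel_left_pos zero_less_numeral)
  also have "\<dots> = 2 * M * (norm v)\<^sup>2 + M * (2 * norm v * d)"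
    by (simp add: algebra_simps power2_eq_square)
  also have "\<dots> \<le> 2 * M * (norm v)\<^sup>2 + M * ((norm v)\<^sup>2 + d\<^sup>2)"
    using sum_squares_bound[of "norm v" d] \<open>M \<ge> 0\<close> by (simp add: mult_left_mono)
  also have "\<dots> \<le> 3 * M * ((norm v)\<^sup>2 + d\<^sup>2)"
    using \<open>M \<ge> 0\<close> by (simp add: algebra_simps)
  finally show ?thesis .
qed

lemma ode_solutions_sq_dist_le:
  fixes f :: "('a::real_inner \<times> real) \<Rightarrow> 'a"
  assumes "a \<le> b" "M \<ge> 0"
    and x_ode: "\<And>t. (x has_vector_derivative f (x t, p t)) (at t)"
    and z_ode: "\<And>t. (z has_vector_derivative f (z t, q t)) (at t)"
    and lip: "\<And>t. a < t \<Longrightarrow> t < b \<Longrightarrow>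
      norm (f (x t, p t) - f (z t, q t)) \<le> M * (norm (x t - z t) + d)"
  shows "(norm (x b - z b))\<^sup>2 + d\<^sup>2 \<le> ((norm (x a - z a))\<^sup>2 + d\<^sup>2) * exp (3 * M * (b - a))"
proof (rule affine_gronwall[where g = "\<lambda>t. (norm (x t - z t))\<^sup>2", OF \<open>a \<le> b\<close>])
  show "((\<lambda>t. (norm (x t - z t))\<^sup>2) has_real_derivative
      2 * ((x t - z t) \<bullet> (f (x t, p t) - f (z t, q t)))) (at t)" for t
    unfolding power2_norm_eq_inner
    by (rule has_real_derivative_inner_self) (intro derivative_intros x_ode z_ode)
  show "2 * ((x t - z t) \<bullet> (f (x t, p t) - f (z t, q t))) \<le> 3 * M * ((norm (x t - z t))\<^sup>2 + d\<^sup>2)"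
    if "a < t" "t < b" for t
    by (rule inner_le_of_norm_le_mult_add[OF \<open>M \<ge> 0\<close> lip[OF that]])
qed

lemma first_reach_time:
  fixes w :: "real \<Rightarrow> real"
  assumes cont: "continuous_on {a..b} w" and "w a < c" and "t0 \<in> {a..b}" "c \<le> w t0"
  obtains t1 where "a < t1" "t1 \<le> b" "c \<le> w t1" "\<And>t. a \<le> t \<Longrightarrow> t < t1 \<Longrightarrow> w t < c"
proof -
  define S where "S = {a..b} \<inter> w -` {c..}"
  have "closed S"
    unfolding S_def by (intro continuous_closed_preimage cont) auto
  moreover have "t0 \<in> S" and bdd: "bdd_below S"
    using assms by (auto simp: S_def bdd_below_def)
  ultimately have "Inf S \<in> S"
    using closed_contains_Inf by blast
  moreover have "w t < c" if "a \<le> t" "t < Inf S" for t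
    using cInf_lower[OF _ bdd, of t] that \<open>Inf S \<in> S\<close> by (force simp: S_def)
  moreover have "Inf S \<noteq> a"
    using \<open>Inf S \<in> S\<close> \<open>w a < c\<close> by (auto simp: S_def)
  ultimately show thesis
    using that[of "Inf S"] by (auto simp: S_def)
qed

lemma ode_continuous_dependence:
  fixes f :: "('a::euclidean_space \<times> real) \<Rightarrow> 'a"
  assumes f: "C1_map f" and "a \<le> b"
    and z_ode: "\<And>t. (z has_vector_derivative f (z t, q t)) (at t)"
    and q_cont: "continuous_on {a..b} q" and "e > 0"
  obtains d where "d > 0"
    "\<And>x p t. (\<And>t. (x has_vector_derivative f (x t, p t)) (at t)) \<Longrightarrow>
       norm (x a - z a) < d \<Longrightarrow> (\<And>t. t \<in> {a..b} \<Longrightarrow> \<bar>p t - q t\<bar> < d) \<Longrightarrow>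
       t \<in> {a..b} \<Longrightarrow> norm (x t - z t) < e"
proof -
  have z_cont: "continuous_on {a..b} z"
    using z_ode by (intro continuous_at_imp_continuous_on ballI has_vector_derivative_continuous)
  obtain R where R: "\<And>t. t \<in> {a..b} \<Longrightarrow> norm (z t) \<le> R"
    using continuous_on_compact_bound[OF compact_Icc z_cont] by blast
  obtain Q where "Q \<ge> 0" and Q: "\<And>t. t \<in> {a..b} \<Longrightarrow> \<bar>q t\<bar> \<le> Q"
    using continuous_on_compact_bound[OF compact_Icc q_cont] by (metis real_norm_def)
  obtain M where "M \<ge> 0" and M: "\<And>u v. u \<in> cball 0 (R + Q + 2) \<Longrightarrow> v \<in> cball 0 (R + Q + 2) \<Longrightarrow>
      norm (f u - f v) \<le> M * norm (u - v)"
    using C1_map_lipschitz_on_cball[OF f] by blast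
  define e' where "e' = min e 1"
  define E where "E = exp (3 * M * (b - a))"
  \<comment> \<open>Gronwall inflates the initial defect \<open>2 d\<^sup>2\<close> by at most \<open>E\<close>, which this \<open>d\<close> keeps below \<open>e'\<^sup>2\<close>.\<close>
  define d where "d = e' / (2 * E)"
  have "0 < e'" "e' \<le> 1" "e' \<le> e"
    using \<open>e > 0\<close> by (auto simp: e'_def)
  have "E \<ge> 1"
    using \<open>M \<ge> 0\<close> \<open>a \<le> b\<close> by (simp add: E_def)
  then have "0 < d" "d \<le> e' / 2"
    using \<open>0 < e'\<close> by (auto simp: d_def field_simps)
  show thesis
  proof (rule that[OF \<open>0 < d\<close>])
    fix x p t
    assume x_ode: "\<And>t. (x has_vector_derivative f (x t, p t)) (at t)"
      and x_a: "norm (x a - z a) < d" and p_close: "\<And>t. t \<in> {a..b} \<Longrightarrow> \<bar>p t - q t\<bar> < d"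
      and t: "t \<in> {a..b}"
    have x_cont: "continuous_on {a..b} x"
      using x_ode by (intro continuous_at_imp_continuous_on ballI has_vector_derivative_continuous)
    show "norm (x t - z t) < e"
    proof (rule ccontr)
      assume "\<not> ?thesis"
      then have "e' \<le> norm (x t - z t)"
        using \<open>e' \<le> e\<close> by linarith
      moreover have "continuous_on {a..b} (\<lambda>s. norm (x s - z s))"
        using x_cont z_cont by (intro continuous_intros)
      moreover have "norm (x a - z a) < e'"
        using x_a \<open>d \<le> e' / 2\<close> \<open>0 < d\<close> by linarith
      ultimately obtain t1 where "a < t1" "t1 \<le> b" and t1_far: "e' \<le> norm (x t1 - z t1)"
        and near: "\<And>s. a \<le> s \<Longrightarrow> s < t1 \<Longrightarrow> norm (x s - z s) < e'"
        using first_reach_time[of a b "\<lambda>s. norm (x s - z s)" e' t] t by blast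
      \<comment> \<open>Up to the first exit from the \<open>e'\<close>-tube both solutions stay in the ball where \<open>f\<close> is \<open>M\<close>-Lipschitz.\<close>
      have lip: "norm (f (x s, p s) - f (z s, q s)) \<le> M * (norm (x s - z s) + d)"
        if "a < s" "s < t1" for s
      proof -
        have s: "s \<in> {a..b}"
          using that \<open>t1 \<le> b\<close> by auto
        have "norm (x s - z s) < 1"
          using near[of s] that \<open>e' \<le> 1\<close> by auto
        then have "norm (x s) \<le> R + 1"
          using norm_triangle_ineq[of "x s - z s" "z s"] R[OF s] by simp
        moreover have "\<bar>p s\<bar> \<le> Q + 1"
          using Q[OF s] p_close[OF s] \<open>d \<le> e' / 2\<close> \<open>e' \<le> 1\<close> by linarith
        ultimately have "(x s, p s) \<in> cball 0 (R + Q + 2)"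
          using norm_Pair_le[of "x s" "p s"] by simp
        moreover have "(z s, q s) \<in> cball 0 (R + Q + 2)"
          using norm_Pair_le[of "z s" "q s"] R[OF s] Q[OF s] \<open>Q \<ge> 0\<close> by simp
        ultimately have "norm (f (x s, p s) - f (z s, q s)) \<le> M * norm (x s - z s, p s - q s)"
          using M by fastforce
        also have "\<dots> \<le> M * (norm (x s - z s) + d)"
          using norm_Pair_le[of "x s - z s" "p s - q s"] p_close[OF s] \<open>M \<ge> 0\<close>
          by (intro mult_left_mono) auto
        finally show ?thesis .
      qed
      have "(norm (x t1 - z t1))\<^sup>2 + d\<^sup>2 \<le> ((norm (x a - z a))\<^sup>2 + d\<^sup>2) * exp (3 * M * (t1 - a))"
        using \<open>a < t1\<close> by (intro ode_solutions_sq_dist_le[OF _ \<open>M \<ge> 0\<close> x_ode z_ode lip]) auto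
      also have "\<dots> \<le> (2 * d\<^sup>2) * E"
      proof (rule mult_mono)
        show "(norm (x a - z a))\<^sup>2 + d\<^sup>2 \<le> 2 * d\<^sup>2"
          using x_a norm_ge_zero[of "x a - z a"] by (simp add: power_mono)
        show "exp (3 * M * (t1 - a)) \<le> E"
          using \<open>M \<ge> 0\<close> \<open>t1 \<le> b\<close> by (simp add: E_def mult_left_mono)
      qed simp_all
      also have "\<dots> < e'\<^sup>2"
        using \<open>E \<ge> 1\<close> \<open>0 < e'\<close> by (simp add: d_def power2_eq_square field_simps)
      finally have "(norm (x t1 - z t1))\<^sup>2 < e'\<^sup>2"
        by (smt (verit) zero_le_power2)
      with t1_far \<open>0 < e'\<close> show False
        by (smt (verit) power_mono)
    qed
  qed
qed

lemma ode_solution_unique: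
  fixes f :: "('a::euclidean_space \<times> real) \<Rightarrow> 'a"
  assumes f: "C1_map f" and q_cont: "continuous_on {a..t} q" and "a \<le> t"
    and x_ode: "\<And>s. (x has_vector_derivative f (x s, q s)) (at s)"
    and z_ode: "\<And>s. (z has_vector_derivative f (z s, q s)) (at s)"
    and "x a = z a"
  shows "x t = z t"
proof -
  have "norm (x t - z t) < e" if "e > 0" for e :: real
  proof -
    obtain d where "d > 0" and close: "\<And>x p s. (\<And>s. (x has_vector_derivative f (x s, p s)) (at s)) \<Longrightarrow>
        norm (x a - z a) < d \<Longrightarrow> (\<And>s. s \<in> {a..t} \<Longrightarrow> \<bar>p s - q s\<bar> < d) \<Longrightarrow>
        s \<in> {a..t} \<Longrightarrow> norm (x s - z s) < e"
      using ode_continuous_dependence[OF f \<open>a \<le> t\<close> z_ode q_cont \<open>e > 0\<close>] by blast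
    show ?thesis
      using close[OF x_ode] \<open>x a = z a\<close> \<open>d > 0\<close> \<open>a \<le> t\<close> by simp
  qed
  then show ?thesis
    by (metis less_irrefl right_minus_eq zero_less_norm_iff)
qed

lemma pdist_eq_infdist: "A \<noteq> {} \<Longrightarrow> pdist x A = infdist x A"
  by (simp add: pdist_def infdist_notempty dist_norm)

lemma nbhd_eq_infdist: "A \<noteq> {} \<Longrightarrow> nbhd \<eta> A = {y. infdist y A < \<eta>}"
  by (simp add: nbhd_def pdist_eq_infdist)

lemma mem_pullback_set_iff:
  "x \<in> pullback_set Phi A \<eta> t \<longleftrightarrow>
     (\<forall>\<tau>>0. \<forall>e>0. \<exists>s\<le>-\<tau>. \<exists>y\<in>nbhd \<eta> A. dist (Phi t s y) x < e)"
  by (simp add: pullback_set_def closure_approachable) blast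

lemma pullback_set_approximating_sequence:
  assumes "x \<in> pullback_set Phi A \<eta> t" and "e > 0"
  obtains S Y where "\<And>k::nat. S k \<le> - real k" "\<And>k. Y k \<in> nbhd \<eta> A"
    "\<And>k. dist (Phi t (S k) (Y k)) x < e"
proof -
  have "\<exists>s y. s \<le> - real k \<and> y \<in> nbhd \<eta> A \<and> dist (Phi t s y) x < e" for k :: nat
    using assms(1)[unfolded mem_pullback_set_iff, rule_format, of "real k + 1" e] \<open>e > 0\<close>
    by (smt (verit) of_nat_0_le_iff)
  then show thesis
    using that by metis
qed

lemma smooth_real_imp_continuous: "smooth_real L \<Longrightarrow> continuous_on UNIV L"
  unfolding smooth_real_def by (metis DERIV_isCont continuous_at_imp_continuous_on)

locale nonautonomous_ode =
  fixes f :: "('a::euclidean_space \<times> real) \<Rightarrow> 'a"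
    and q :: "real \<Rightarrow> real"
    and Phi :: "real \<Rightarrow> real \<Rightarrow> 'a \<Rightarrow> 'a"
  assumes f_C1: "C1_map f"
    and q_cont: "continuous_on UNIV q"
    and Phi_init: "\<And>s x. Phi s s x = x"
    and Phi_ode: "\<And>s x t. ((\<lambda>t. Phi t s x) has_vector_derivative f (Phi t s x, q t)) (at t)"
begin

lemma cocycle:
  assumes "u \<le> t"
  shows "Phi t u (Phi u s x) = Phi t s x"
  by (rule ode_solution_unique[OF f_C1 continuous_on_subset[OF q_cont] assms Phi_ode Phi_ode])
    (simp_all add: Phi_init)

lemma enters_nbhd_near_attracted_point:
  fixes phi :: "real \<Rightarrow> 'a \<Rightarrow> 'a"
  assumes q_lim: "(q \<longlongrightarrow> lm) at_bot"
    and phi_init: "phi 0 z = z"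
    and phi_ode: "\<And>t. ((\<lambda>t. phi t z) has_vector_derivative f (phi t z, lm)) (at t)"
    and attracted: "((\<lambda>T. infdist (phi T z) A) \<longlongrightarrow> 0) at_top" and "\<eta> > 0"
  obtains T d U where "d > 0"
    "\<And>s y. s + T \<le> U \<Longrightarrow> dist y z < d \<Longrightarrow> infdist (Phi (s + T) s y) A < \<eta>"
proof -
  have "\<forall>\<^sub>F T in at_top. infdist (phi T z) A < \<eta> / 2"
    using order_tendstoD(2)[OF attracted, of "\<eta> / 2"] \<open>\<eta> > 0\<close> by simp
  then obtain T0 where "\<And>T. T \<ge> T0 \<Longrightarrow> infdist (phi T z) A < \<eta> / 2"
    by (auto simp: eventually_at_top_linorder)
  then obtain T where "T \<ge> 0" and T: "infdist (phi T z) A < \<eta> / 2"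
    by (meson max.cobounded1 max.cobounded2)
  obtain d where "d > 0" and close: "\<And>x p t. (\<And>t. (x has_vector_derivative f (x t, p t)) (at t)) \<Longrightarrow>
      norm (x 0 - phi 0 z) < d \<Longrightarrow> (\<And>t. t \<in> {0..T} \<Longrightarrow> \<bar>p t - lm\<bar> < d) \<Longrightarrow>
      t \<in> {0..T} \<Longrightarrow> norm (x t - phi t z) < \<eta> / 2"
    using ode_continuous_dependence[OF f_C1 \<open>T \<ge> 0\<close> phi_ode continuous_on_const, of "\<eta> / 2"] \<open>\<eta> > 0\<close>
    by auto
  obtain U where U: "\<And>v. v \<le> U \<Longrightarrow> \<bar>q v - lm\<bar> < d"
    using tendstoD[OF q_lim \<open>d > 0\<close>] by (auto simp: eventually_at_bot_linorder dist_real_def)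
  show thesis
  proof (rule that[OF \<open>d > 0\<close>])
    fix s y assume "s + T \<le> U" "dist y z < d"
    have "norm (Phi (s + T) s y - phi T z) < \<eta> / 2"
    proof (rule close[of "\<lambda>\<tau>. Phi (s + \<tau>) s y" "\<lambda>\<tau>. q (s + \<tau>)"])
      show "((\<lambda>\<tau>. Phi (s + \<tau>) s y) has_vector_derivative f (Phi (s + \<tau>) s y, q (s + \<tau>))) (at \<tau>)" for \<tau>
        by (rule has_vector_derivative_shift_arg[OF Phi_ode])
      show "norm (Phi (s + 0) s y - phi 0 z) < d"
        using \<open>dist y z < d\<close> by (simp add: Phi_init phi_init dist_norm)
      show "\<bar>q (s + \<tau>) - lm\<bar> < d" if "\<tau> \<in> {0..T}" for \<tau>
        using that \<open>s + T \<le> U\<close> by (intro U) auto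
    qed (use \<open>T \<ge> 0\<close> in auto)
    then show "infdist (Phi (s + T) s y) A < \<eta>"
      using infdist_triangle[of "Phi (s + T) s y" A "phi T z"] T by (simp add: dist_norm)
  qed
qed

lemma pullback_set_subset_of_basin:
  fixes phi :: "real \<Rightarrow> 'a \<Rightarrow> 'a"
  assumes q_lim: "(q \<longlongrightarrow> lm) at_bot"
    and phi_init: "\<And>y. phi 0 y = y"
    and phi_ode: "\<And>y t. ((\<lambda>t. phi t y) has_vector_derivative f (phi t y, lm)) (at t)"
    and "compact A" "A \<noteq> {}"
    and basin: "\<And>y. infdist y A < \<eta>b \<Longrightarrow> ((\<lambda>T. infdist (phi T y) A) \<longlongrightarrow> 0) at_top"
    and "\<eta> > 0" "0 < \<eta>'" "\<eta>' < \<eta>b"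
  shows "pullback_set Phi A \<eta>' t \<subseteq> pullback_set Phi A \<eta> t"
proof
  fix x assume x: "x \<in> pullback_set Phi A \<eta>' t"
  show "x \<in> pullback_set Phi A \<eta> t"
    unfolding mem_pullback_set_iff nbhd_eq_infdist[OF \<open>A \<noteq> {}\<close>]
  proof (intro allI impI)
    fix \<tau> e :: real assume "\<tau> > 0" "e > 0"
    obtain S Y where S: "\<And>k. S k \<le> - real k" and Y: "\<And>k. Y k \<in> nbhd \<eta>' A"
      and Phi_close: "\<And>k. dist (Phi t (S k) (Y k)) x < e"
      by (rule pullback_set_approximating_sequence[OF x \<open>e > 0\<close>]) blast
    have "\<forall>k. Y k \<in> {y. infdist y A \<le> \<eta>'}"
      using Y by (auto simp: nbhd_eq_infdist[OF \<open>A \<noteq> {}\<close>] less_imp_le)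
    then obtain y0 \<sigma> where "y0 \<in> {y. infdist y A \<le> \<eta>'}" "strict_mono \<sigma>"
      and Y_lim: "(Y \<circ> \<sigma>) \<longlonglongrightarrow> y0"
      by (rule seq_compactE[OF compact_imp_seq_compact[OF
            compact_infdist_le[OF \<open>A \<noteq> {}\<close> \<open>compact A\<close> \<open>0 < \<eta>'\<close>]]])
    then have "((\<lambda>T. infdist (phi T y0) A) \<longlongrightarrow> 0) at_top"
      using basin \<open>\<eta>' < \<eta>b\<close> by simp
    then obtain T d U where "d > 0" and enter:
      "\<And>s y. s + T \<le> U \<Longrightarrow> dist y y0 < d \<Longrightarrow> infdist (Phi (s + T) s y) A < \<eta>"
      by (rule enters_nbhd_near_attracted_point[where phi = phi and z = y0, OF q_lim phi_init phi_ode _ \<open>\<eta> > 0\<close>]) blast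
    define m where "m = min (min U t) (- \<tau>)"
    have "\<forall>\<^sub>F k in sequentially. dist (Y (\<sigma> k)) y0 < d"
      using tendstoD[OF Y_lim \<open>d > 0\<close>] by simp
    moreover have "\<forall>\<^sub>F k in sequentially. S (\<sigma> k) + T \<le> m"
    proof (rule eventually_sequentiallyI[of "nat \<lceil>T - m\<rceil>"])
      fix k assume "nat \<lceil>T - m\<rceil> \<le> k"
      moreover have "real k \<le> real (\<sigma> k)"
        using seq_suble[OF \<open>strict_mono \<sigma>\<close>] by simp
      ultimately show "S (\<sigma> k) + T \<le> m"
        using S[of "\<sigma> k"] by linarith
    qed
    ultimately obtain k where k_close: "dist (Y (\<sigma> k)) y0 < d" and k_early: "S (\<sigma> k) + T \<le> m"
      using eventually_happens'[OF trivial_limit_sequentially eventually_conj] by blast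
    define s where "s = S (\<sigma> k)"
    define y where "y = Phi (s + T) s (Y (\<sigma> k))"
    show "\<exists>s'\<le>-\<tau>. \<exists>y'\<in>{y. infdist y A < \<eta>}. dist (Phi t s' y') x < e"
    proof (intro exI[of _ "s + T"] conjI bexI[of _ y])
      show "s + T \<le> -\<tau>"
        using k_early by (simp add: s_def m_def)
      show "y \<in> {y. infdist y A < \<eta>}"
        using enter k_early k_close by (simp add: y_def s_def m_def)
      have "Phi t (s + T) y = Phi t s (Y (\<sigma> k))"
        using k_early by (simp add: y_def cocycle m_def s_def)
      then show "dist (Phi t (s + T) y) x < e"
        using Phi_close by (simp add: s_def)
    qed
  qed
qed

end

theorem lemma2p4:
  fixes f :: "((real^'n) \<times> real) \<Rightarrow> real^'n"
    and L :: "real \<Rightarrow> real"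
    and lm lp r :: real
    and Phi :: "real \<Rightarrow> real \<Rightarrow> real^'n \<Rightarrow> real^'n"
    and phim :: "real \<Rightarrow> real^'n \<Rightarrow> real^'n"
    and Am :: "(real^'n) set"
  assumes f_C1: "C1_map f"
    and lm_lp: "lm < lp"
    and shift: "parameter_shift L lm lp"
    and r_pos: "r > 0"
    and Phi_init: "\<And>s x0. Phi s s x0 = x0"
    and Phi_ode: "\<And>s x0 t. ((\<lambda>t. Phi t s x0) has_vector_derivative
                              f (Phi t s x0, L (r * t))) (at t)"
    and phim_init: "\<And>y. phim 0 y = y"
    and phim_ode: "\<And>y t. ((\<lambda>t. phim t y) has_vector_derivative f (phim t y, lm)) (at t)"
    and Am_ne: "Am \<noteq> {}"
    and Am_stable: "asymp_stable phim Am"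
  shows "\<exists>\<eta>0>0. \<forall>\<eta>\<in>{0<..\<eta>0}. \<forall>\<eta>'\<in>{0<..\<eta>0}. \<forall>t.
           pullback_set Phi Am \<eta> t = pullback_set Phi Am \<eta>' t"
proof -
  have "compact Am"
    using Am_stable by (simp add: asymp_stable_def)
  obtain \<eta>b where "\<eta>b > 0"
    and basin: "\<And>y. y \<in> nbhd \<eta>b Am \<Longrightarrow> ((\<lambda>t. pdist (phim t y) Am) \<longlongrightarrow> 0) at_top"
    using Am_stable unfolding asymp_stable_def by blast
  have "continuous_on UNIV L"
    using shift by (simp add: parameter_shift_def smooth_real_imp_continuous)
  then interpret nonautonomous_ode f "\<lambda>t. L (r * t)" Phi
    by unfold_locales
      (auto intro: f_C1 Phi_init Phi_ode continuous_on_compose2[of UNIV L] continuous_intros)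
  \<comment> \<open>Only the behaviour of \<open>L\<close> at \<open>-\<infinity>\<close> enters.\<close>
  have "LIM t at_bot. r * t :> at_bot"
    using filterlim_tendsto_pos_mult_at_bot[OF tendsto_const r_pos filterlim_ident] .
  then have q_lim: "((\<lambda>t. L (r * t)) \<longlongrightarrow> lm) at_bot"
    using shift by (auto simp: parameter_shift_def intro: filterlim_compose)
  have subset: "pullback_set Phi Am \<eta>' t \<subseteq> pullback_set Phi Am \<eta> t"
    if "\<eta> > 0" "0 < \<eta>'" "\<eta>' < \<eta>b" for \<eta> \<eta>' t
    using pullback_set_subset_of_basin[OF q_lim phim_init phim_ode \<open>compact Am\<close> Am_ne _ that] basin
    by (simp add: nbhd_eq_infdist[OF Am_ne] pdist_eq_infdist[OF Am_ne])
  show ?thesis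
  proof (intro exI[of _ "\<eta>b / 2"] conjI ballI allI)
    fix \<eta> \<eta>' t assume "\<eta> \<in> {0<..\<eta>b / 2}" "\<eta>' \<in> {0<..\<eta>b / 2}"
    then show "pullback_set Phi Am \<eta> t = pullback_set Phi Am \<eta>' t"
      using \<open>\<eta>b > 0\<close> by (intro subset_antisym subset) auto
  qed (use \<open>\<eta>b > 0\<close> in simp)
qed

end
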